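(* Let $v$ be the current view of a server $s$, i.e., $s.cview=v$. If server $s$ installs view $v.succ$, then at least a weighted majority (for view $v$) of servers, including $s$, had uninstalled view $v$.
   Context: Servers $S=\{s_1,\dots,s_n\}$ in an asynchronous crash-prone message-passing system with reliable links. Views form a sequence $v_0,v_1,\dots$ with $v_{k+1}=v_k.succ$. Each server has a current view $s.cview$ (initially $v_0$) and a weight in each view. A weighted majority for view $v$ is a set of servers whose weights in $v$ sum to more than $n/2$. View changer run by each server $s$ with $s.cview=v$: when a local timeout for $v$ expires it sends $\langle\text{change\_view},v.succ\rangle$ to all servers; once it has received or sent change\_view for $v.succ$ it forwards it if not already sent, disables read/write operations, sends $\langle\text{state\_update},(val,ts,cid),v,w\rangle$ to all servers (its register state and its weight $w$ in $v$) — at this point it has uninstalled $v$ — waits until it has state\_update messages for view $v$ whose weights sum to more than $n/2$, adopts the register value with lexicographically largest $(ts,cid)$ among them, and then sets $s.cview\leftarrow v.succ$ (installs $v.succ$) and re-enables read/write operations. *)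

theory Defs
  imports Complex_Main
begin

(* Servers: elements of a finite type 's; n = card (UNIV :: 's set).
   Views: v_k is represented by the natural number k, so v.succ = Suc v.
   Register state: (val, ts, cid) :: 'v \<times> nat \<times> 'c.
   Weights: wt s v is the weight of server s in view v. *)

datatype ('v, 'c) msg =
    ChangeView nat
  | StateUpdate "'v \<times> nat \<times> 'c" nat real   (* register state, view, weight *)

record ('s, 'v, 'c) lstate =
  cview      :: nat
  reg        :: "'v \<times> nat \<times> 'c"
  rw_enabled :: bool
  cv_sent    :: "nat set"          (* views w for which change_view w was sent *)
  uninst     :: "nat set"          (* views v that were uninstalled (state_update for v sent) *)
  crashed    :: bool
  inbox      :: "('s \<times> ('v, 'c) msg) set"   (* received messages, with sender *)

record ('s, 'v, 'c) gstate =
  loc :: "'s \<Rightarrow> ('s, 'v, 'c) lstate"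
  net :: "('s \<times> 's \<times> ('v, 'c) msg) set"   (* sent messages: (sender, receiver, msg) *)

definition wmajority :: "('s::finite \<Rightarrow> nat \<Rightarrow> real) \<Rightarrow> nat \<Rightarrow> 's set \<Rightarrow> bool" where
  "wmajority wt v Q \<longleftrightarrow> (\<Sum>q\<in>Q. wt q v) > real (card (UNIV :: 's set)) / 2"

definition broadcast :: "'s \<Rightarrow> ('v, 'c) msg \<Rightarrow> ('s \<times> 's \<times> ('v, 'c) msg) set" where
  "broadcast s m = {(s, q, m) | q. True}"

fun msg_weight :: "('v, 'c) msg \<Rightarrow> real" where
  "msg_weight (StateUpdate r v w) = w"
| "msg_weight (ChangeView _) = 0"

definition lex_le :: "nat \<times> 'c::linorder \<Rightarrow> nat \<times> 'c \<Rightarrow> bool" where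
  "lex_le a b \<longleftrightarrow> fst a < fst b \<or> (fst a = fst b \<and> snd a \<le> snd b)"

definition init_state :: "'v \<times> nat \<times> 'c \<Rightarrow> ('s, 'v, 'c) gstate" where
  "init_state r0 = \<lparr> loc = (\<lambda>s. \<lparr> cview = 0, reg = r0, rw_enabled = True, cv_sent = {},
                                    uninst = {}, crashed = False, inbox = {} \<rparr>),
                      net = {} \<rparr>"

inductive step :: "('s::finite \<Rightarrow> nat \<Rightarrow> real)
                   \<Rightarrow> ('s, 'v, 'c::linorder) gstate \<Rightarrow> ('s, 'v, 'c) gstate \<Rightarrow> bool"
  for wt where
  (* reliable asynchronous links: a sent message may be delivered at any time *)
  deliver: "\<lbrakk> (p, s, m) \<in> net g; \<not> crashed (loc g s) \<rbrakk> \<Longrightarrow>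
     step wt g (g\<lparr> loc := (loc g)(s := loc g s\<lparr> inbox := insert (p, m) (inbox (loc g s)) \<rparr>) \<rparr>)"
  (* the local timeout for the current view v expires *)
| timeout: "\<lbrakk> \<not> crashed (loc g s); cview (loc g s) = v; Suc v \<notin> cv_sent (loc g s) \<rbrakk> \<Longrightarrow>
     step wt g \<lparr> loc = (loc g)(s := loc g s\<lparr> cv_sent := insert (Suc v) (cv_sent (loc g s)) \<rparr>),
                 net = net g \<union> broadcast s (ChangeView (Suc v)) \<rparr>"
  (* once change_view v.succ has been received or sent: forward it if not yet sent,
     disable read/write operations, send state_update; this uninstalls v *)
| uninstall: "\<lbrakk> \<not> crashed (loc g s); cview (loc g s) = v; v \<notin> uninst (loc g s);
                Suc v \<in> cv_sent (loc g s) \<or> (\<exists>p. (p, ChangeView (Suc v)) \<in> inbox (loc g s)) \<rbrakk> \<Longrightarrow>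
     step wt g \<lparr> loc = (loc g)(s := loc g s\<lparr> cv_sent := insert (Suc v) (cv_sent (loc g s)),
                                               rw_enabled := False,
                                               uninst := insert v (uninst (loc g s)) \<rparr>),
                 net = net g
                       \<union> (if Suc v \<in> cv_sent (loc g s) then {} else broadcast s (ChangeView (Suc v)))
                       \<union> broadcast s (StateUpdate (reg (loc g s)) v (wt s v)) \<rparr>"
  (* having state_update messages for v whose weights sum to more than n/2,
     adopt the register value with lexicographically largest (ts, cid) and install v.succ *)
| install: "\<lbrakk> \<not> crashed (loc g s); cview (loc g s) = v; v \<in> uninst (loc g s);
              M \<subseteq> inbox (loc g s); finite M;
              \<forall>(p, m) \<in> M. \<exists>r w. m = StateUpdate r v w;
              (\<Sum>(p, m)\<in>M. msg_weight m) > real (card (UNIV :: 's set)) / 2;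
              (p0, StateUpdate r v w0) \<in> M;
              \<forall>(p, m) \<in> M. \<forall>r' w'. m = StateUpdate r' v w' \<longrightarrow> lex_le (snd r') (snd r) \<rbrakk> \<Longrightarrow>
     step wt g (g\<lparr> loc := (loc g)(s := loc g s\<lparr> reg := r, cview := Suc v, rw_enabled := True \<rparr>) \<rparr>)"
  (* read/write operations (only while enabled) may change the register state *)
| operation: "\<lbrakk> \<not> crashed (loc g s); rw_enabled (loc g s) \<rbrakk> \<Longrightarrow>
     step wt g (g\<lparr> loc := (loc g)(s := loc g s\<lparr> reg := r' \<rparr>) \<rparr>)"
| crash: "step wt g (g\<lparr> loc := (loc g)(s := loc g s\<lparr> crashed := True \<rparr>) \<rparr>)"

definition reachable :: "('s::finite \<Rightarrow> nat \<Rightarrow> real) \<Rightarrow> 'v \<times> nat \<times> 'c::linorder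
                         \<Rightarrow> ('s, 'v, 'c) gstate \<Rightarrow> bool" where
  "reachable wt r0 g \<longleftrightarrow> (step wt)\<^sup>*\<^sup>* (init_state r0) g"

end

theory Submission
  imports Defs
begin

text \<open>Installing v.succ requires received state_update messages for v of total weight more
  than n/2. In every reachable state, a state_update for v was sent by a server that had
  already uninstalled v, carries that server's weight in v, and is the only register state
  that server sends for v. So the senders of those messages are distinct servers that have
  uninstalled v, and their weights add up to the weight of the messages.\<close>

definition received_were_sent :: "('s, 'v, 'c) gstate \<Rightarrow> bool" where
  "received_were_sent g \<longleftrightarrow> (\<forall>s p m. (p, m) \<in> inbox (loc g s) \<longrightarrow> (p, s, m) \<in> net g)"

definition state_updates_sound :: "('s \<Rightarrow> nat \<Rightarrow> real) \<Rightarrow> ('s, 'v, 'c) gstate \<Rightarrow> bool" where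
  "state_updates_sound wt g \<longleftrightarrow>
    (\<forall>p q r v w. (p, q, StateUpdate r v w) \<in> net g \<longrightarrow>
       v \<in> uninst (loc g p) \<and> w = wt p v \<and>
       (\<forall>q' r' w'. (p, q', StateUpdate r' v w') \<in> net g \<longrightarrow> r' = r))"

lemma step_preserves_received_were_sent:
  assumes "step wt g g'" "received_were_sent g"
  shows "received_were_sent g'"
  using assms by induction (auto simp: received_were_sent_def)

lemma step_preserves_state_updates_sound:
  assumes "step wt g g'" "state_updates_sound wt g"
  shows "state_updates_sound wt g'"
  using assms
proof induction
  case (uninstall g s v)
  let ?g' = "\<lparr>loc = (loc g)(s := loc g s\<lparr> cv_sent := insert (Suc v) (cv_sent (loc g s)),
                                               rw_enabled := False,
                                               uninst := insert v (uninst (loc g s)) \<rparr>),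
                 net = net g
                       \<union> (if Suc v \<in> cv_sent (loc g s) then {} else broadcast s (ChangeView (Suc v)))
                       \<union> broadcast s (StateUpdate (reg (loc g s)) v (wt s v)) \<rparr>"
  have net_new: "(p, q, StateUpdate r v' w) \<in> net ?g' \<longleftrightarrow>
      (p, q, StateUpdate r v' w) \<in> net g \<or> (p = s \<and> v' = v \<and> r = reg (loc g s) \<and> w = wt s v)"
    for p q r v' w
    by (auto simp: broadcast_def)
  \<comment> \<open>s has not uninstalled v yet, so its new state_update is its first one for v\<close>
  have "(s, q, StateUpdate r v w) \<notin> net g" for q r w
    using uninstall.hyps(3) uninstall.prems unfolding state_updates_sound_def by blast
  moreover have uninst': "v' \<in> uninst (loc ?g' p) \<longleftrightarrow> v' \<in> uninst (loc g p) \<or> (p = s \<and> v' = v)"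
    for p v' by auto
  ultimately show ?case
    using uninstall.prems unfolding state_updates_sound_def net_new uninst' by blast
qed (auto simp: state_updates_sound_def broadcast_def)

lemma reachable_invariants:
  assumes "reachable wt r0 g"
  shows "received_were_sent g \<and> state_updates_sound wt g"
  using assms unfolding reachable_def
proof (induction rule: rtranclp_induct)
  case base
  show ?case by (simp add: init_state_def received_were_sent_def state_updates_sound_def)
next
  case (step g g')
  then show ?case
    using step_preserves_received_were_sent step_preserves_state_updates_sound by blast
qed

lemma received_state_update_sound:
  assumes "received_were_sent g" "state_updates_sound wt g"
    and "(p, StateUpdate r v w) \<in> inbox (loc g s)"
  shows "v \<in> uninst (loc g p)" "w = wt p v"
    and "(p, StateUpdate r' v w') \<in> inbox (loc g s) \<Longrightarrow> r' = r"
  using assms unfolding received_were_sent_def state_updates_sound_def by blast+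

lemma received_state_updates_weight:
  assumes "received_were_sent g" "state_updates_sound wt g"
    and M: "M \<subseteq> inbox (loc g s)" "\<forall>(p, m) \<in> M. \<exists>r w. m = StateUpdate r v w"
  shows "fst ` M \<subseteq> {q. v \<in> uninst (loc g q)}"
    and "(\<Sum>(p, m)\<in>M. msg_weight m) = (\<Sum>q\<in>fst ` M. wt q v)"
proof -
  have sound: "v \<in> uninst (loc g p) \<and> msg_weight m = wt p v" if pm: "(p, m) \<in> M" for p m
  proof -
    obtain r w where m: "m = StateUpdate r v w"
      using M(2) pm by blast
    then have "(p, StateUpdate r v w) \<in> inbox (loc g s)"
      using M(1) pm by blast
    with m show ?thesis
      using received_state_update_sound(1,2)[OF assms(1,2)] by simp
  qed
  have unique: "m' = m" if pm: "(p, m) \<in> M" and pm': "(p, m') \<in> M" for p m m'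
  proof -
    obtain r w r' w' where m: "m = StateUpdate r v w" and m': "m' = StateUpdate r' v w'"
      using M(2) pm pm' by blast
    then have "r' = r"
      using M(1) pm pm' received_state_update_sound(3)[OF assms(1,2)] by blast
    with m m' sound[OF pm] sound[OF pm'] show ?thesis
      by simp
  qed
  show "fst ` M \<subseteq> {q. v \<in> uninst (loc g q)}"
    using sound by force
  have "inj_on fst M"
    using unique by (intro inj_onI) force
  moreover have "(\<Sum>(p, m)\<in>M. msg_weight m) = (\<Sum>x\<in>M. wt (fst x) v)"
    using sound by (intro sum.cong) auto
  ultimately show "(\<Sum>(p, m)\<in>M. msg_weight m) = (\<Sum>q\<in>fst ` M. wt q v)"
    by (simp add: sum.reindex)
qed

lemma step_installing_succ:
  fixes g g' :: "('s::finite, 'v, 'c::linorder) gstate"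
  assumes "step wt g g'" "cview (loc g s) = v" "cview (loc g' s) = Suc v"
  obtains M where "v \<in> uninst (loc g s)" "M \<subseteq> inbox (loc g s)"
    "\<forall>(p, m) \<in> M. \<exists>r w. m = StateUpdate r v w"
    "(\<Sum>(p, m)\<in>M. msg_weight m) > real (card (UNIV :: 's set)) / 2"
  using assms(1)
proof cases
  case (install s' v' M)
  then have "s' = s"
    using assms(2,3) by (auto split: if_splits)
  with install assms(2) show thesis
    by (intro that[of M]) auto
qed (use assms(2,3) in \<open>auto split: if_splits\<close>)

theorem lemma1:
  fixes wt :: "'s::finite \<Rightarrow> nat \<Rightarrow> real"
    and r0 :: "'v \<times> nat \<times> 'c::linorder"
    and g g' :: "('s, 'v, 'c) gstate"
  assumes "reachable wt r0 g"
    and "step wt g g'"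
    and "cview (loc g s) = v"
    and "cview (loc g' s) = Suc v"
  shows "s \<in> {q. v \<in> uninst (loc g q)}
         \<and> (\<exists>Q \<subseteq> {q. v \<in> uninst (loc g q)}. wmajority wt v Q)"
proof -
  obtain M where uninstalled: "v \<in> uninst (loc g s)" and M: "M \<subseteq> inbox (loc g s)"
    "\<forall>(p, m) \<in> M. \<exists>r w. m = StateUpdate r v w"
    and heavy: "(\<Sum>(p, m)\<in>M. msg_weight m) > real (card (UNIV :: 's set)) / 2"
    using step_installing_succ[OF assms(2-4)] .
  have "received_were_sent g" "state_updates_sound wt g"
    using reachable_invariants[OF assms(1)] by auto
  note senders = received_state_updates_weight[OF this M]
  have "wmajority wt v (fst ` M)"
    using heavy senders(2) by (simp add: wmajority_def)
  with uninstalled senders(1) show ?thesis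
    by blast
qed

end
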